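(* For every $\theta\in\mathcal{P}$ there exists $\beta\in\mathcal{KL}$ such that the following holds. Let $t_0\ge0$, $\tau\in(0,\infty]$, let $\omega:[t_0,t_0+\tau)\to\mathbb{R}_+$ be continuous, and let $\eta:[t_0,t_0+\tau)\to\mathbb{R}_+$ be right-continuous and piecewise continuous. If $$D^{+}\omega(t)\le -\theta(\omega(t))+\eta(t)\quad\text{for all } t\in[t_0,t_0+\tau),$$ then $$\omega(t)\le \beta(\omega(t_0),t-t_0)+2\int_{t_0}^{t}\eta(s)\,ds\quad\text{for all } t\in[t_0,t_0+\tau).$$
   Context: $D^+$ denotes the right upper Dini derivative: $D^+\omega(t)=\limsup_{h\to0^+}\frac{\omega(t+h)-\omega(t)}{h}$. Comparison functions: $\mathcal{P}$ is the set of continuous $\gamma:\mathbb{R}_+\to\mathbb{R}_+$ with $\gamma(0)=0$ and $\gamma(r)>0$ for $r>0$. $\mathcal{K}$ is the set of strictly increasing $\gamma\in\mathcal{P}$. $\mathcal{L}$ is the set of continuous, strictly decreasing $\gamma:\mathbb{R}_+\to\mathbb{R}_+$ with limit $0$ at $\infty$. $\mathcal{KL}$ is the set of continuous $\beta:\mathbb{R}_+^2\to\mathbb{R}_+$ such that $\beta(\cdot,t)\in\mathcal{K}$ for all $t\ge0$ and $\beta(r,\cdot)\in\mathcal{L}$ for all $r>0$. *)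

theory Defs
  imports "HOL-Analysis.Analysis"
begin

text \<open>Comparison functions, as functions real \<Rightarrow> real considered on the domain {0..} = R_+.\<close>

definition class_P :: "(real \<Rightarrow> real) set" where
  "class_P = {\<gamma>. continuous_on {0..} \<gamma> \<and> \<gamma> 0 = 0 \<and> (\<forall>r>0. \<gamma> r > 0)}"

definition class_K :: "(real \<Rightarrow> real) set" where
  "class_K = {\<gamma>. \<gamma> \<in> class_P \<and> strict_mono_on {0..} \<gamma>}"

definition class_L :: "(real \<Rightarrow> real) set" where
  "class_L = {\<gamma>. continuous_on {0..} \<gamma> \<and> (\<forall>r\<ge>0. \<gamma> r \<ge> 0)
      \<and> (\<forall>r s. 0 \<le> r \<longrightarrow> r < s \<longrightarrow> \<gamma> s < \<gamma> r) \<and> (\<gamma> \<longlongrightarrow> 0) at_top}"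

definition class_KL :: "(real \<Rightarrow> real \<Rightarrow> real) set" where
  "class_KL = {\<beta>. continuous_on ({0..} \<times> {0..}) (\<lambda>(r, t). \<beta> r t)
      \<and> (\<forall>t\<ge>0. (\<lambda>r. \<beta> r t) \<in> class_K)
      \<and> (\<forall>r>0. (\<lambda>t. \<beta> r t) \<in> class_L)}"

definition dini_upper_right :: "(real \<Rightarrow> real) \<Rightarrow> real \<Rightarrow> ereal" where
  "dini_upper_right \<omega> t = Limsup (at_right 0) (\<lambda>h. ereal ((\<omega> (t + h) - \<omega> t) / h))"

definition piecewise_continuous_on :: "real set \<Rightarrow> (real \<Rightarrow> real) \<Rightarrow> bool" where
  "piecewise_continuous_on I f \<longleftrightarrow>
     (\<forall>a b. {a..b} \<subseteq> I \<longrightarrow> finite {x\<in>{a..b}. \<not> continuous (at x within I) f})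
     \<and> (\<forall>x\<in>I. \<exists>l. (f \<longlongrightarrow> l) (at_right x))
     \<and> (\<forall>x\<in>I. (\<exists>y\<in>I. y < x) \<longrightarrow> (\<exists>l. (f \<longlongrightarrow> l) (at_left x)))"

definition right_continuous_on :: "real set \<Rightarrow> (real \<Rightarrow> real) \<Rightarrow> bool" where
  "right_continuous_on I f \<longleftrightarrow> (\<forall>x\<in>I. continuous (at_right x) f)"

end

theory Submission
  imports Defs
begin

text \<open>Let u(s) = \<omega>(s) - \<integral> \<eta> over [t0, s]. The Dini inequality together with right continuity
  of \<eta> gives D+ u \<le> -\<theta>(\<omega>), so u is nonincreasing. If \<omega>(t) exceeds twice the integral of \<eta>,
  then x = u(t) > 0 and \<omega> stays in [x, 2r] on [t0, t], where r = \<omega>(t0); hence u decreases at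
  least at rate m = min \<theta> over [x, 2r], i.e. x + m (t - t0) \<le> r.
  To turn this into a KL bound, take a continuous strictly increasing \<rho> on [0, 1] with
  \<rho>(y) \<le> min \<theta> over [y, 1/y]. For y = x/(2r+1)^2 one has [x, 2r] \<subseteq> [y, 1/y], so
  \<rho>(y) (t - t0 + 1) \<le> r + \<rho>(1), and inverting \<rho> bounds x by
  (2r+1)^2 \<rho>^-1((r + \<rho>(1)) / (t - t0 + 1)), which tends to 0 as t grows.\<close>

section \<open>A comparison principle for right Dini derivatives\<close>

lemma le_by_right_increments:
  fixes f :: "real \<Rightarrow> real"
  assumes "a \<le> b" and cont: "continuous_on {a..b} f"
    and incr: "\<And>s. s \<in> {a..<b} \<Longrightarrow> \<forall>\<^sub>F h in at_right 0. f (s + h) - f s \<le> L * h"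
  shows "f b \<le> f a + L * (b - a)"
proof -
  define P where "P x \<longleftrightarrow> f x \<le> f a + L * (x - a)" for x
  define S where "S = {s\<in>{a..b}. \<forall>x\<in>{a..s}. P x}"
  define m where "m = Sup S"
  have "a \<in> S" using \<open>a \<le> b\<close> by (simp add: S_def P_def)
  have bdd: "bdd_above S" by (rule bdd_aboveI[of _ b]) (simp add: S_def)
  have "a \<le> m" unfolding m_def using \<open>a \<in> S\<close> bdd by (rule cSup_upper)
  have "m \<le> b" unfolding m_def using \<open>a \<in> S\<close> by (intro cSup_least) (auto simp: S_def)
  have P_below: "P x" if "a \<le> x" "x < m" for x
  proof -
    obtain s where "s \<in> S" "x < s"
      using less_cSupD[of S x] \<open>a \<in> S\<close> \<open>x < m\<close> unfolding m_def by blast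
    then show ?thesis using that by (simp add: S_def)
  qed
  have "P m"
  proof (cases "a < m")
    case True
    have "(f \<longlongrightarrow> f m) (at_left m)"
      using continuous_on_Icc_at_leftD[OF continuous_on_subset[OF cont] True] \<open>m \<le> b\<close> by simp
    moreover have "((\<lambda>x. f a + L * (x - a)) \<longlongrightarrow> f a + L * (m - a)) (at_left m)"
      by (intro tendsto_intros)
    moreover have "\<forall>\<^sub>F x in at_left m. f x \<le> f a + L * (x - a)"
      unfolding eventually_at_left_field using True P_below by (auto simp: P_def)
    ultimately show ?thesis unfolding P_def by (intro tendsto_le[of "at_left m"]) simp_all
  qed (use \<open>a \<le> m\<close> in \<open>simp add: P_def\<close>)
  then have P_upto: "P x" if "x \<in> {a..m}" for x using P_below that by (cases "x = m") auto
  have "m = b" \<comment> \<open>otherwise the increment bound at m pushes the supremum beyond m\<close>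
  proof (rule ccontr)
    assume "m \<noteq> b"
    with \<open>a \<le> m\<close> \<open>m \<le> b\<close> have "m \<in> {a..<b}" by simp
    then obtain d where "d > 0" and d: "\<And>h. 0 < h \<Longrightarrow> h < d \<Longrightarrow> f (m + h) - f m \<le> L * h"
      using incr[of m] unfolding eventually_at_right_field by blast
    define h where "h = min d (b - m) / 2"
    have h: "0 < h" "h < d" "m + h \<le> b"
      using \<open>d > 0\<close> \<open>m \<in> {a..<b}\<close> by (auto simp: h_def min_def field_simps)
    have "P x" if "x \<in> {a..m + h}" for x
    proof (cases "x \<le> m")
      case False
      then have "f x - f m \<le> L * (x - m)" using d[of "x - m"] that h by simp
      with \<open>P m\<close> show ?thesis by (simp add: P_def algebra_simps)
    qed (use that P_upto in simp)
    with h \<open>a \<le> m\<close> have "m + h \<in> S" by (simp add: S_def)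
    then have "m + h \<le> m" using bdd unfolding m_def by (rule cSup_upper)
    with h show False by simp
  qed
  with \<open>P m\<close> show ?thesis by (simp add: P_def)
qed

lemma le_by_right_slopes:
  fixes f :: "real \<Rightarrow> real"
  assumes "a \<le> b" and "continuous_on {a..b} f"
    and slope: "\<And>s e. s \<in> {a..<b} \<Longrightarrow> 0 < e \<Longrightarrow>
      \<forall>\<^sub>F h in at_right 0. f (s + h) - f s \<le> (e - c) * h"
  shows "f b \<le> f a - c * (b - a)"
proof (rule field_le_epsilon)
  fix e :: real assume "0 < e"
  show "f b \<le> f a - c * (b - a) + e"
  proof (cases "a = b")
    case False
    with \<open>a \<le> b\<close> have "0 < b - a" by simp
    with \<open>0 < e\<close> have "f b \<le> f a + (e / (b - a) - c) * (b - a)"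
      by (intro le_by_right_increments assms slope) auto
    moreover have "(e / (b - a) - c) * (b - a) = e - c * (b - a)"
      using \<open>0 < b - a\<close> by (simp add: field_simps)
    ultimately show ?thesis by simp
  qed (use \<open>0 < e\<close> in simp)
qed

lemma eventually_increment_less_of_dini:
  assumes "dini_upper_right \<omega> s < ereal q"
  shows "\<forall>\<^sub>F h in at_right 0. \<omega> (s + h) - \<omega> s < q * h"
proof -
  have "\<forall>\<^sub>F h in at_right 0. (\<omega> (s + h) - \<omega> s) / h < q"
    using Limsup_lessD[OF assms[unfolded dini_upper_right_def]] by simp
  moreover have "\<forall>\<^sub>F h in at_right (0::real). 0 < h" by (simp add: eventually_at_right_less)
  ultimately show ?thesis by eventually_elim (simp add: pos_divide_less_eq)
qed

lemma eventually_integral_ge_right: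
  fixes \<eta> :: "real \<Rightarrow> real"
  assumes "continuous (at_right s) \<eta>" and "\<eta> integrable_on {s..b}" and "s < b" and "0 < e"
  shows "\<forall>\<^sub>F h in at_right 0. (\<eta> s - e) * h \<le> integral {s..s + h} \<eta>"
proof -
  have "\<forall>\<^sub>F y in at_right s. \<eta> s - e < \<eta> y"
    using assms(1,4) by (intro order_tendstoD) (auto simp: continuous_within)
  then obtain d where "d > s" and d: "\<And>y. s < y \<Longrightarrow> y < d \<Longrightarrow> \<eta> s - e < \<eta> y"
    unfolding eventually_at_right_field by auto
  have "\<forall>\<^sub>F h in at_right (0::real). 0 < h \<and> h < d - s \<and> h < b - s"
    unfolding eventually_at_right_field using \<open>d > s\<close> \<open>s < b\<close>
    by (intro exI[of _ "min (d - s) (b - s)"]) auto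
  then show ?thesis
  proof eventually_elim
    case (elim h)
    have "integral {s..s + h} (\<lambda>_. \<eta> s - e) \<le> integral {s..s + h} \<eta>"
      using elim d assms(4)
      by (intro integral_le integrable_subinterval_real[OF assms(2)]) (auto simp: le_less)
    with elim show ?case by (simp add: mult.commute)
  qed
qed

lemma dini_integral_comparison:
  fixes \<omega> \<eta> \<theta> :: "real \<Rightarrow> real"
  assumes "a \<le> b" and "continuous_on {a..b} \<omega>" and "\<eta> integrable_on {a..b}"
    and "\<And>s. s \<in> {a..<b} \<Longrightarrow> continuous (at_right s) \<eta>"
    and dini: "\<And>s. s \<in> {a..<b} \<Longrightarrow> dini_upper_right \<omega> s \<le> ereal (- \<theta> (\<omega> s) + \<eta> s)"
    and "\<And>s. s \<in> {a..<b} \<Longrightarrow> m \<le> \<theta> (\<omega> s)"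
  shows "\<omega> b \<le> \<omega> a - m * (b - a) + integral {a..b} \<eta>"
proof -
  define u where "u s = \<omega> s - integral {a..s} \<eta>" for s
  have "u b \<le> u a - m * (b - a)"
  proof (rule le_by_right_slopes[OF \<open>a \<le> b\<close>])
    show "continuous_on {a..b} u"
      unfolding u_def using assms(2) indefinite_integral_continuous_1[OF assms(3)]
      by (intro continuous_intros)
  next
    fix s e :: real assume s: "s \<in> {a..<b}" and "0 < e"
    have "dini_upper_right \<omega> s < ereal (- \<theta> (\<omega> s) + \<eta> s + e / 2)"
      using dini[OF s] \<open>0 < e\<close> by (simp add: le_less_trans)
    then have "\<forall>\<^sub>F h in at_right 0. \<omega> (s + h) - \<omega> s < (- \<theta> (\<omega> s) + \<eta> s + e / 2) * h"
      by (rule eventually_increment_less_of_dini)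
    moreover have "\<forall>\<^sub>F h in at_right 0. (\<eta> s - e / 2) * h \<le> integral {s..s + h} \<eta>"
      using s \<open>0 < e\<close> assms(4)
      by (intro eventually_integral_ge_right integrable_subinterval_real[OF assms(3)]) auto
    moreover have "\<forall>\<^sub>F h in at_right (0::real). 0 < h \<and> s + h \<le> b"
      unfolding eventually_at_right_field using s by (intro exI[of _ "b - s"]) auto
    ultimately show "\<forall>\<^sub>F h in at_right 0. u (s + h) - u s \<le> (e - m) * h"
    proof eventually_elim
      case (elim h)
      have "integral {a..s + h} \<eta> = integral {a..s} \<eta> + integral {s..s + h} \<eta>"
        using elim s
        by (intro Henstock_Kurzweil_Integration.integral_combine[symmetric]
            integrable_subinterval_real[OF assms(3)]) auto
      then have "u (s + h) - u s = (\<omega> (s + h) - \<omega> s) - integral {s..s + h} \<eta>"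
        by (simp add: u_def)
      also have "\<dots> \<le> (- \<theta> (\<omega> s) + \<eta> s + e / 2) * h - (\<eta> s - e / 2) * h"
        using elim by linarith
      also have "\<dots> = (e - \<theta> (\<omega> s)) * h" by (simp add: algebra_simps)
      also have "\<dots> \<le> (e - m) * h" using assms(6)[OF s] elim by (intro mult_right_mono) auto
      finally show ?case .
    qed
  qed
  then show ?thesis by (simp add: u_def)
qed

lemma trajectory_estimate:
  fixes \<omega> \<eta> \<theta> :: "real \<Rightarrow> real"
  assumes "t0 \<le> t" and "continuous_on {t0..t} \<omega>" and "\<eta> integrable_on {t0..t}"
    and \<omega>_nonneg: "\<And>s. s \<in> {t0..t} \<Longrightarrow> 0 \<le> \<omega> s"
    and \<eta>_nonneg: "\<And>s. s \<in> {t0..t} \<Longrightarrow> 0 \<le> \<eta> s"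
    and "\<And>s. s \<in> {t0..<t} \<Longrightarrow> continuous (at_right s) \<eta>"
    and "\<And>s. s \<in> {t0..<t} \<Longrightarrow> dini_upper_right \<omega> s \<le> ereal (- \<theta> (\<omega> s) + \<eta> s)"
    and \<theta>_nonneg: "\<And>r. 0 \<le> r \<Longrightarrow> 0 \<le> \<theta> r"
    and large: "2 * integral {t0..t} \<eta> < \<omega> t"
    and m: "\<forall>z\<in>{\<omega> t - integral {t0..t} \<eta>..2 * \<omega> t0}. m \<le> \<theta> z"
  shows "\<omega> t - integral {t0..t} \<eta> + m * (t - t0) \<le> \<omega> t0"
proof -
  define E where "E s = integral {t0..s} \<eta>" for s
  have E_diff: "E s2 - E s1 = integral {s1..s2} \<eta>" if "t0 \<le> s1" "s1 \<le> s2" "s2 \<le> t" for s1 s2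
    using Henstock_Kurzweil_Integration.integral_combine[of t0 s1 s2 \<eta>]
      integrable_subinterval_real[OF assms(3), of t0 s2] that by (simp add: E_def)
  have integral_nonneg: "0 \<le> integral {s1..s2} \<eta>" if "t0 \<le> s1" "s1 \<le> s2" "s2 \<le> t" for s1 s2
    using that \<eta>_nonneg by (intro integral_nonneg integrable_subinterval_real[OF assms(3)]) auto
  have E_bounds: "0 \<le> E s" "E s \<le> E t" if "s \<in> {t0..t}" for s
    using that E_diff[of s t] integral_nonneg[of t0 s] integral_nonneg[of s t] by (auto simp: E_def)
  have comparison: "\<omega> s2 \<le> \<omega> s1 - m' * (s2 - s1) + (E s2 - E s1)"
    if "t0 \<le> s1" "s1 \<le> s2" "s2 \<le> t" "\<And>s. s \<in> {s1..<s2} \<Longrightarrow> m' \<le> \<theta> (\<omega> s)" for s1 s2 m'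
    unfolding E_diff[OF that(1-3)] using that assms
    by (intro dini_integral_comparison[where \<theta> = \<theta>] continuous_on_subset[OF assms(2)]
        integrable_subinterval_real[OF assms(3)]) auto
  have decreasing: "\<omega> s2 - E s2 \<le> \<omega> s1 - E s1" if "t0 \<le> s1" "s1 \<le> s2" "s2 \<le> t" for s1 s2
    using comparison[OF that, of 0] that \<omega>_nonneg \<theta>_nonneg by simp
  have "\<omega> s \<in> {\<omega> t - E t..2 * \<omega> t0}" if "s \<in> {t0..t}" for s
    using decreasing[of s t] decreasing[of t0 s] E_bounds[OF that] that large
    by (simp add: E_def)
  then show ?thesis
    using comparison[of t0 t m] m \<open>t0 \<le> t\<close> by (auto simp: E_def)
qed

section \<open>Integrability of piecewise continuous functions\<close>

lemma integrable_Icc_continuous_interior: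
  fixes f :: "real \<Rightarrow> real"
  assumes "a < b" and "continuous (at_right a) f" and "(f \<longlongrightarrow> l) (at_left b)"
    and "\<And>x. x \<in> {a<..<b} \<Longrightarrow> isCont f x"
  shows "f integrable_on {a..b}"
proof -
  define g where "g x = (if x = b then l else f x)" for x
  have "\<forall>\<^sub>F x in at_right a. f x = g x"
    unfolding eventually_at_right_field g_def using \<open>a < b\<close> by (intro exI[of _ b]) auto
  moreover have "(f \<longlongrightarrow> g a) (at_right a)"
    using assms(2) \<open>a < b\<close> by (simp add: continuous_within g_def)
  ultimately have "(g \<longlongrightarrow> g a) (at_right a)" by (rule tendsto_cong[THEN iffD1])
  moreover have "\<forall>\<^sub>F x in at_left b. f x = g x"
    unfolding eventually_at_left_field g_def using \<open>a < b\<close> by (intro exI[of _ a]) auto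
  with assms(3) have "(g \<longlongrightarrow> g b) (at_left b)"
    unfolding g_def by (simp add: tendsto_cong[symmetric])
  moreover have "g \<midarrow>x\<rightarrow> g x" if "x \<in> {a<..<b}" for x
  proof -
    have "\<forall>\<^sub>F y in at x. f y = g y"
      using eventually_neq_at_within[of b x UNIV] by eventually_elim (simp add: g_def)
    moreover have "f \<midarrow>x\<rightarrow> g x" using assms(4)[OF that] that by (simp add: isCont_def g_def)
    ultimately show ?thesis by (rule tendsto_cong[THEN iffD1])
  qed
  ultimately have "continuous_on {a..b} g"
    using \<open>a < b\<close> by (intro continuous_on_IccI) simp_all
  then have "g integrable_on {a..b}" by (rule integrable_continuous_interval)
  then show ?thesis by (rule integrable_spike_finite[of "{b}", rotated 2]) (simp_all add: g_def)
qed

lemma piecewise_continuous_integrable: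
  fixes f :: "real \<Rightarrow> real"
  assumes "piecewise_continuous_on I f" and "right_continuous_on I f" and "{a..b} \<subseteq> I"
  shows "f integrable_on {a..b}"
  using \<open>{a..b} \<subseteq> I\<close>
proof (induction "card {x\<in>{a<..<b}. \<not> continuous (at x within I) f}" arbitrary: a b
    rule: less_induct)
  case less
  define D where "D a b = {x\<in>{a<..<b}. \<not> continuous (at x within I) f}" for a b
  have "finite {x\<in>{a..b}. \<not> continuous (at x within I) f}"
    using assms(1) less.prems by (simp add: piecewise_continuous_on_def)
  then have "finite (D a b)" by (rule finite_subset[rotated]) (auto simp: D_def)
  show ?case
  proof (cases "a < b")
    case False
    then show ?thesis by (intro has_integral_integrable[OF has_integral_null_real]) simp
  next
    case True
    show ?thesis
    proof (cases "D a b = {}")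
      case True
      have "a \<in> I" "b \<in> I" using less.prems \<open>a < b\<close> by auto
      have "isCont f x" if "x \<in> {a<..<b}" for x
      proof -
        have "x \<notin> D a b" using \<open>D a b = {}\<close> by simp
        then have "continuous (at x within I) f" using that by (simp add: D_def)
        moreover have "x \<in> interior I" using that interior_mono[OF less.prems] by (simp add: subset_iff)
        ultimately show ?thesis by (simp only: at_within_interior)
      qed
      moreover have "continuous (at_right a) f"
        using assms(2) \<open>a \<in> I\<close> by (simp add: right_continuous_on_def)
      moreover have "\<forall>x\<in>I. (\<exists>y\<in>I. y < x) \<longrightarrow> (\<exists>l. (f \<longlongrightarrow> l) (at_left x))"
        using assms(1) by (simp add: piecewise_continuous_on_def)
      then obtain l where "(f \<longlongrightarrow> l) (at_left b)" using \<open>a \<in> I\<close> \<open>b \<in> I\<close> \<open>a < b\<close> by blast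
      ultimately show ?thesis using \<open>a < b\<close> by (intro integrable_Icc_continuous_interior)
    next
      case False
      then obtain c where c: "c \<in> D a b" by blast
      then have "D a c \<subseteq> D a b - {c}" "D c b \<subseteq> D a b - {c}" by (auto simp: D_def)
      then have lt: "card (D a c) < card (D a b)" "card (D c b) < card (D a b)"
        using \<open>finite (D a b)\<close> card_Diff1_less[OF \<open>finite (D a b)\<close> c]
        by (meson card_mono finite_Diff le_less_trans)+
      have "{a..c} \<subseteq> I" "{c..b} \<subseteq> I" "a \<le> c" "c \<le> b"
        using c less.prems by (auto simp: D_def)
      then have "f integrable_on {a..c}" "f integrable_on {c..b}"
        using less.hyps[OF lt(1)[unfolded D_def]] less.hyps[OF lt(2)[unfolded D_def]]
        by simp_all
      with \<open>a \<le> c\<close> \<open>c \<le> b\<close> show ?thesis by (rule Henstock_Kurzweil_Integration.integrable_combine)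
    qed
  qed
qed

section \<open>A KL bound for a positive definite rate\<close>

lemma class_P_nonneg: "\<theta> \<in> class_P \<Longrightarrow> 0 \<le> r \<Longrightarrow> 0 \<le> \<theta> r"
  by (cases "r = 0") (auto simp: class_P_def less_imp_le)

definition lower_envelope :: "(real \<Rightarrow> real) \<Rightarrow> real \<Rightarrow> real" where
  "lower_envelope \<theta> y = (if y \<le> 0 then 0 else Inf (\<theta> ` {y..1/y}))"

lemma lower_envelope_attained:
  assumes "\<theta> \<in> class_P" and "0 < y" and "y \<le> 1"
  obtains x where "x \<in> {y..1/y}" and "lower_envelope \<theta> y = \<theta> x"
    and "\<And>z. z \<in> {y..1/y} \<Longrightarrow> \<theta> x \<le> \<theta> z"
proof -
  have "y * y \<le> 1" using assms(2,3) by (simp add: mult_le_one)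
  then have "{y..1/y} \<noteq> {}" using assms(2) by (simp add: field_simps)
  moreover have "continuous_on {y..1/y} \<theta>"
    using assms(1,2) by (auto simp: class_P_def intro: continuous_on_subset)
  ultimately obtain x where x: "x \<in> {y..1/y}" "\<forall>z\<in>{y..1/y}. \<theta> x \<le> \<theta> z"
    using continuous_attains_inf[OF compact_Icc] by blast
  then have "Inf (\<theta> ` {y..1/y}) = \<theta> x" by (intro cInf_eq_minimum) auto
  with x assms(2) show ?thesis by (intro that) (auto simp: lower_envelope_def)
qed

lemma lower_envelope_le:
  "\<theta> \<in> class_P \<Longrightarrow> 0 < y \<Longrightarrow> y \<le> 1 \<Longrightarrow> y \<le> z \<Longrightarrow> z \<le> 1/y \<Longrightarrow> lower_envelope \<theta> y \<le> \<theta> z"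
  by (metis atLeastAtMost_iff lower_envelope_attained)

lemma lower_envelope_pos:
  "\<theta> \<in> class_P \<Longrightarrow> 0 < y \<Longrightarrow> y \<le> 1 \<Longrightarrow> 0 < lower_envelope \<theta> y"
  by (rule lower_envelope_attained) (auto simp: class_P_def)

lemma lower_envelope_mono:
  assumes "\<theta> \<in> class_P"
  shows "mono_on {..1} (lower_envelope \<theta>)"
proof (rule mono_onI)
  fix y1 y2 :: real assume "y1 \<in> {..1}" "y2 \<in> {..1}" "y1 \<le> y2"
  show "lower_envelope \<theta> y1 \<le> lower_envelope \<theta> y2"
  proof (cases "0 < y1")
    case True
    obtain x where x: "x \<in> {y2..1/y2}" "lower_envelope \<theta> y2 = \<theta> x"
      using lower_envelope_attained[OF assms, of y2] True \<open>y1 \<le> y2\<close> \<open>y2 \<in> {..1}\<close> by auto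
    have "1/y2 \<le> 1/y1" using True \<open>y1 \<le> y2\<close> by (simp add: frac_le)
    with x True \<open>y1 \<le> y2\<close> \<open>y2 \<in> {..1}\<close> show ?thesis
      by (auto intro: lower_envelope_le[OF assms])
  next
    case False
    then show ?thesis using lower_envelope_pos[OF assms, of y2] \<open>y2 \<in> {..1}\<close>
      by (cases "0 < y2") (auto simp: lower_envelope_def)
  qed
qed

lemma class_P_minorant:
  assumes "\<theta> \<in> class_P"
  obtains \<rho> where "continuous_on {0..1} \<rho>" and "\<rho> 0 = 0" and "strict_mono_on {0..1} \<rho>"
    and "\<And>y z. 0 < y \<Longrightarrow> y \<le> 1 \<Longrightarrow> y \<le> z \<Longrightarrow> z \<le> 1/y \<Longrightarrow> \<rho> y \<le> \<theta> z"
proof \<comment> \<open>integration turns the monotone envelope into a continuous minorant\<close>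
  let ?k = "lower_envelope \<theta>"
  have int: "?k integrable_on {a..b}" if "b \<le> 1" for a b
    using lower_envelope_mono[OF assms] that
    by (intro integrable_on_mono_on) (auto elim: mono_on_subset)
  show "continuous_on {0..1} (\<lambda>y. integral {0..y} ?k)"
    by (rule indefinite_integral_continuous_1[OF int]) simp
  show "integral {0..0} ?k = 0" by simp
  have k_mono: "?k y \<le> ?k z" if "y \<le> z" "z \<le> 1" for y z
    using that by (intro mono_onD[OF lower_envelope_mono[OF assms]]) auto
  have integral_ge: "(b - a) * ?k a \<le> integral {a..b} ?k" if "a \<le> b" "b \<le> 1" for a b
  proof -
    have "integral {a..b} (\<lambda>_. ?k a) \<le> integral {a..b} ?k"
      using that by (intro integral_le int) (auto intro: k_mono)
    then show ?thesis using that by simp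
  qed
  have integral_split: "integral {a..c} ?k = integral {a..b} ?k + integral {b..c} ?k"
    if "a \<le> b" "b \<le> c" "c \<le> 1" for a b c
    using Henstock_Kurzweil_Integration.integral_combine[of a b c ?k] int[of c a] that by simp
  show "strict_mono_on {0..1} (\<lambda>y. integral {0..y} ?k)"
  proof (rule strict_mono_onI)
    fix y1 y2 :: real assume y: "y1 \<in> {0..1}" "y2 \<in> {0..1}" "y1 < y2"
    define m where "m = (y1 + y2) / 2"
    have m: "y1 < m" "m < y2" using y by (auto simp: m_def)
    have "0 \<le> (m - y1) * ?k y1"
      using y m lower_envelope_pos[OF assms, of y1] by (cases "y1 = 0") (auto simp: lower_envelope_def)
    moreover have "0 < (y2 - m) * ?k m"
      using y m lower_envelope_pos[OF assms, of m] by simp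
    moreover have "(m - y1) * ?k y1 \<le> integral {y1..m} ?k" "(y2 - m) * ?k m \<le> integral {m..y2} ?k"
      using y m by (auto intro!: integral_ge)
    ultimately have "0 < integral {y1..m} ?k + integral {m..y2} ?k" by linarith
    then show "integral {0..y1} ?k < integral {0..y2} ?k"
      using integral_split[of 0 y1 y2] integral_split[of y1 m y2] y m by simp
  qed
  fix y z :: real assume yz: "0 < y" "y \<le> 1" "y \<le> z" "z \<le> 1/y"
  have "integral {0..y} ?k \<le> integral {0..y} (\<lambda>_. ?k y)"
    using yz by (intro integral_le int) (auto intro: k_mono)
  also have "\<dots> \<le> ?k y"
    using yz lower_envelope_pos[OF assms, of y] by (simp add: mult_le_cancel_right1)
  also have "\<dots> \<le> \<theta> z" using yz by (rule lower_envelope_le[OF assms])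
  finally show "integral {0..y} ?k \<le> \<theta> z" .
qed

lemma strict_mono_continuous_inverse:
  fixes \<rho> :: "real \<Rightarrow> real"
  assumes "a \<le> b" and cont: "continuous_on {a..b} \<rho>" and mono: "strict_mono_on {a..b} \<rho>"
  defines "F \<equiv> the_inv_into {a..b} \<rho>"
  shows "continuous_on {\<rho> a..\<rho> b} F" and "F (\<rho> a) = a" and "mono_on {\<rho> a..\<rho> b} F"
    and "\<And>y w. y \<in> {a..b} \<Longrightarrow> w \<in> {\<rho> a..\<rho> b} \<Longrightarrow> y \<le> F w \<longleftrightarrow> \<rho> y \<le> w"
proof -
  have inj: "inj_on \<rho> {a..b}" using mono by (rule strict_mono_on_imp_inj_on)
  have image: "\<rho> ` {a..b} = {\<rho> a..\<rho> b}"
  proof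
    show "\<rho> ` {a..b} \<subseteq> {\<rho> a..\<rho> b}"
      using \<open>a \<le> b\<close> by (auto intro!: strict_mono_on_leD[OF mono])
    show "{\<rho> a..\<rho> b} \<subseteq> \<rho> ` {a..b}"
      using IVT'[of \<rho> a _ b] \<open>a \<le> b\<close> cont by (fastforce simp: image_iff)
  qed
  have F: "F w \<in> {a..b}" "\<rho> (F w) = w" if "w \<in> {\<rho> a..\<rho> b}" for w
    using that image the_inv_into_into[OF inj, of w "{a..b}"] f_the_inv_into_f[OF inj, of w]
    unfolding F_def by auto
  show "continuous_on {\<rho> a..\<rho> b} F"
    using continuous_on_inv_into[OF cont compact_Icc inj] image by (simp add: F_def)
  show "F (\<rho> a) = a"
    using the_inv_into_f_f[OF inj] \<open>a \<le> b\<close> by (simp add: F_def)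
  show galois: "y \<le> F w \<longleftrightarrow> \<rho> y \<le> w" if "y \<in> {a..b}" "w \<in> {\<rho> a..\<rho> b}" for y w
    using strict_mono_on_less_eq[OF mono that(1) F(1)[OF that(2)]] F(2)[OF that(2)] by simp
  show "mono_on {\<rho> a..\<rho> b} F"
    by (rule mono_onI) (use F galois in \<open>meson atLeastAtMost_iff order.trans order_refl\<close>)
qed

text \<open>The minimum with r and the summand r exp(-t) only serve to make the bound vanish at r = 0
  and strictly monotone in both arguments.\<close>

definition KL_bound :: "real \<Rightarrow> (real \<Rightarrow> real) \<Rightarrow> real \<Rightarrow> real \<Rightarrow> real" where
  "KL_bound c F r t = min r ((2 * r + 1)\<^sup>2 * F (min c ((r + c) / (t + 1)))) + r * exp (- t)"

context
  fixes c :: real and F :: "real \<Rightarrow> real"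
  assumes c_pos: "0 < c" and F_cont: "continuous_on {0..c} F" and F_zero: "F 0 = 0"
    and F_mono: "mono_on {0..c} F"
begin

lemma KL_bound_arg_mem: "0 \<le> r \<Longrightarrow> 0 \<le> t \<Longrightarrow> min c ((r + c) / (t + 1)) \<in> {0..c}"
  using c_pos by auto

lemma KL_bound_F_nonneg: "0 \<le> r \<Longrightarrow> 0 \<le> t \<Longrightarrow> 0 \<le> F (min c ((r + c) / (t + 1)))"
  using mono_onD[OF F_mono, of 0] KL_bound_arg_mem c_pos F_zero by auto

lemma KL_bound_continuous: "continuous_on ({0..} \<times> {0..}) (\<lambda>(r, t). KL_bound c F r t)"
proof -
  have "continuous_on ({0..} \<times> {0..}) (\<lambda>p. min c ((fst p + c) / (snd p + 1)))"
    by (intro continuous_intros) auto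
  then have "continuous_on ({0..} \<times> {0..}) (\<lambda>p. F (min c ((fst p + c) / (snd p + 1))))"
    by (rule continuous_on_compose2[OF F_cont]) (auto intro: KL_bound_arg_mem)
  then show ?thesis
    unfolding KL_bound_def case_prod_beta' by (intro continuous_intros)
qed

lemma KL_bound_zero: "0 \<le> t \<Longrightarrow> KL_bound c F 0 t = 0"
  using KL_bound_F_nonneg[of 0 t] by (simp add: KL_bound_def)

lemma KL_bound_strict_mono:
  assumes "0 \<le> r1" and "r1 < r2" and "0 \<le> t"
  shows "KL_bound c F r1 t < KL_bound c F r2 t"
proof -
  have "(r1 + c) / (t + 1) \<le> (r2 + c) / (t + 1)"
    using assms by (intro divide_right_mono) auto
  then have "F (min c ((r1 + c) / (t + 1))) \<le> F (min c ((r2 + c) / (t + 1)))"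
    using assms KL_bound_arg_mem[of r1 t] KL_bound_arg_mem[of r2 t]
    by (intro mono_onD[OF F_mono]) auto
  moreover have "(2 * r1 + 1)\<^sup>2 \<le> (2 * r2 + 1)\<^sup>2" using assms by (intro power_mono) auto
  ultimately have "(2 * r1 + 1)\<^sup>2 * F (min c ((r1 + c) / (t + 1)))
      \<le> (2 * r2 + 1)\<^sup>2 * F (min c ((r2 + c) / (t + 1)))"
    using KL_bound_F_nonneg[of r1 t] assms by (intro mult_mono) auto
  moreover have "r1 * exp (- t) < r2 * exp (- t)" using assms by simp
  ultimately show ?thesis unfolding KL_bound_def using \<open>r1 < r2\<close> by linarith
qed

lemma KL_bound_strict_antimono:
  assumes "0 < r" and "0 \<le> t1" and "t1 < t2"
  shows "KL_bound c F r t2 < KL_bound c F r t1"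
proof -
  have "(r + c) / (t2 + 1) \<le> (r + c) / (t1 + 1)"
    using assms c_pos by (intro divide_left_mono) auto
  then have "F (min c ((r + c) / (t2 + 1))) \<le> F (min c ((r + c) / (t1 + 1)))"
    using assms KL_bound_arg_mem[of r t1] KL_bound_arg_mem[of r t2]
    by (intro mono_onD[OF F_mono]) auto
  then have "(2 * r + 1)\<^sup>2 * F (min c ((r + c) / (t2 + 1)))
      \<le> (2 * r + 1)\<^sup>2 * F (min c ((r + c) / (t1 + 1)))"
    by (intro mult_left_mono) auto
  moreover have "r * exp (- t2) < r * exp (- t1)" using assms by simp
  ultimately show ?thesis unfolding KL_bound_def by linarith
qed

lemma KL_bound_tendsto_zero:
  assumes "0 \<le> r"
  shows "((\<lambda>t. KL_bound c F r t) \<longlongrightarrow> 0) at_top"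
proof -
  have "((\<lambda>t. (r + c) / (t + 1)) \<longlongrightarrow> 0) at_top" by real_asymp
  then have lim: "((\<lambda>t. min c ((r + c) / (t + 1))) \<longlongrightarrow> 0) at_top"
    using tendsto_min[OF tendsto_const, of _ 0 at_top c] c_pos by simp
  have "\<forall>\<^sub>F t in at_top. min c ((r + c) / (t + 1)) \<in> {0..c}"
    using eventually_ge_at_top[of 0] by eventually_elim (use assms KL_bound_arg_mem in auto)
  then have F_lim: "((\<lambda>t. F (min c ((r + c) / (t + 1)))) \<longlongrightarrow> F 0) at_top"
    using continuous_on_tendsto_compose[OF F_cont lim] c_pos by simp
  have exp_lim: "((\<lambda>t. exp (- t)) \<longlongrightarrow> (0::real)) at_top" by real_asymp
  show ?thesis
    using tendsto_add[OF tendsto_min[OF tendsto_const tendsto_mult[OF tendsto_const F_lim]]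
        tendsto_mult[OF tendsto_const exp_lim], of r "(2 * r + 1)\<^sup>2" r]
    unfolding KL_bound_def using F_zero assms by simp
qed

lemma KL_bound_in_class_KL: "KL_bound c F \<in> class_KL"
proof -
  have r_section: "continuous_on {0..} (\<lambda>r. KL_bound c F r t)" if "0 \<le> t" for t
  proof -
    have "continuous_on {0..} (\<lambda>r. (\<lambda>(r, t). KL_bound c F r t) (r, t))"
      by (rule continuous_on_compose2[OF KL_bound_continuous]) (use that in \<open>auto intro!: continuous_intros\<close>)
    then show ?thesis by simp
  qed
  have t_section: "continuous_on {0..} (\<lambda>t. KL_bound c F r t)" if "0 \<le> r" for r
  proof -
    have "continuous_on {0..} (\<lambda>t. (\<lambda>(r, t). KL_bound c F r t) (r, t))"
      by (rule continuous_on_compose2[OF KL_bound_continuous]) (use that in \<open>auto intro!: continuous_intros\<close>)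
    then show ?thesis by simp
  qed
  have "(\<lambda>r. KL_bound c F r t) \<in> class_K" if "0 \<le> t" for t
    using r_section[OF that] KL_bound_zero[OF that] KL_bound_strict_mono[of 0 _ t] that
    by (auto simp: class_K_def class_P_def intro!: strict_mono_onI KL_bound_strict_mono)
  moreover have "(\<lambda>t. KL_bound c F r t) \<in> class_L" if "0 < r" for r
    using t_section[of r] KL_bound_zero KL_bound_strict_mono[of 0 r] KL_bound_strict_antimono[OF that]
      KL_bound_tendsto_zero[of r] that
    by (force simp: class_L_def)
  ultimately show ?thesis using KL_bound_continuous by (simp add: class_KL_def)
qed

end

lemma le_KL_bound:
  fixes \<rho> F :: "real \<Rightarrow> real"
  assumes galois: "\<And>y w. y \<in> {0..1} \<Longrightarrow> w \<in> {0..c} \<Longrightarrow> y \<le> F w \<longleftrightarrow> \<rho> y \<le> w"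
    and \<rho>_range: "\<And>y. y \<in> {0..1} \<Longrightarrow> \<rho> y \<in> {0..c}"
    and "0 \<le> t" and "0 < x" and "x \<le> r" and decay: "x + \<rho> (x / (2 * r + 1)\<^sup>2) * t \<le> r"
  shows "x \<le> KL_bound c F r t"
proof -
  define y where "y = x / (2 * r + 1)\<^sup>2"
  have "r \<le> (2 * r + 1)\<^sup>2" using assms by (simp add: power2_eq_square algebra_simps)
  then have y: "y \<in> {0..1}" using assms by (auto simp: y_def field_simps)
  then have "\<rho> y \<in> {0..c}" by (rule \<rho>_range)
  with decay assms(3,4) have "\<rho> y * (t + 1) \<le> r + c" by (simp add: y_def algebra_simps)
  with \<open>0 \<le> t\<close> have "\<rho> y \<le> (r + c) / (t + 1)" by (simp add: pos_le_divide_eq)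
  with \<open>\<rho> y \<in> {0..c}\<close> have "y \<le> F (min c ((r + c) / (t + 1)))"
    using galois[OF y] assms by auto
  then have "x \<le> (2 * r + 1)\<^sup>2 * F (min c ((r + c) / (t + 1)))"
    using assms by (simp add: y_def field_simps)
  with \<open>x \<le> r\<close> have "x \<le> min r ((2 * r + 1)\<^sup>2 * F (min c ((r + c) / (t + 1))))" by simp
  moreover have "0 \<le> r * exp (- t)" using assms by simp
  ultimately show ?thesis unfolding KL_bound_def by linarith
qed

lemma KL_bound_exists:
  assumes "\<theta> \<in> class_P"
  obtains \<beta> where "\<beta> \<in> class_KL"
    and "\<And>r t x. 0 \<le> t \<Longrightarrow> 0 < x \<Longrightarrow> (\<And>m. \<forall>z\<in>{x..2 * r}. m \<le> \<theta> z \<Longrightarrow> x + m * t \<le> r)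
      \<Longrightarrow> x \<le> \<beta> r t"
proof -
  obtain \<rho> where cont: "continuous_on {0..1} \<rho>" and "\<rho> 0 = 0" and mono: "strict_mono_on {0..1} \<rho>"
    and minorant: "\<And>y z. 0 < y \<Longrightarrow> y \<le> 1 \<Longrightarrow> y \<le> z \<Longrightarrow> z \<le> 1/y \<Longrightarrow> \<rho> y \<le> \<theta> z"
    using class_P_minorant[OF assms] by blast
  define F where "F = the_inv_into {0..1} \<rho>"
  note inverse = strict_mono_continuous_inverse[OF zero_le_one cont mono, folded F_def,
      unfolded \<open>\<rho> 0 = 0\<close>]
  have "0 < \<rho> 1" using strict_mono_onD[OF mono, of 0 1] \<open>\<rho> 0 = 0\<close> by simp
  have \<rho>_range: "\<rho> y \<in> {0..\<rho> 1}" if "y \<in> {0..1}" for y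
    using that strict_mono_on_leD[OF mono, of 0 y] strict_mono_on_leD[OF mono, of y 1] \<open>\<rho> 0 = 0\<close>
    by auto
  show ?thesis
  proof
    show "KL_bound (\<rho> 1) F \<in> class_KL"
      using KL_bound_in_class_KL \<open>0 < \<rho> 1\<close> inverse by blast
  next
    fix r t x :: real
    assume "0 \<le> t" "0 < x" and decay: "\<And>m. \<forall>z\<in>{x..2 * r}. m \<le> \<theta> z \<Longrightarrow> x + m * t \<le> r"
    have "x \<le> r" using decay[of 0] class_P_nonneg[OF assms] \<open>0 < x\<close> by simp
    define y where "y = x / (2 * r + 1)\<^sup>2"
    have "2 * r * x \<le> 2 * r * r" using \<open>0 < x\<close> \<open>x \<le> r\<close> by (intro mult_left_mono) auto
    also have "\<dots> \<le> (2 * r + 1)\<^sup>2"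
      using \<open>0 < x\<close> \<open>x \<le> r\<close> by (simp add: power2_eq_square algebra_simps)
    finally have "2 * r \<le> 1 / y" using \<open>0 < x\<close> by (simp add: y_def field_simps)
    moreover have "1 \<le> (2 * r + 1)\<^sup>2" "r \<le> (2 * r + 1)\<^sup>2"
      using \<open>0 < x\<close> \<open>x \<le> r\<close> by (auto simp: power2_eq_square algebra_simps)
    then have "0 < y" "y \<le> x" "y \<le> 1"
      using \<open>0 < x\<close> \<open>x \<le> r\<close> by (auto simp: y_def field_simps)
    ultimately have "x + \<rho> y * t \<le> r"
      using minorant by (intro decay) auto
    then show "x \<le> KL_bound (\<rho> 1) F r t"
      using inverse(4) \<rho>_range \<open>0 \<le> t\<close> \<open>0 < x\<close> \<open>x \<le> r\<close>
      by (intro le_KL_bound[where F = F and \<rho> = \<rho>]) (auto simp: y_def)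
  qed
qed

lemma class_KL_nonneg:
  assumes "\<beta> \<in> class_KL" and "0 \<le> r" and "0 \<le> t"
  shows "0 \<le> \<beta> r t"
proof -
  have "\<beta> 0 t = 0" "strict_mono_on {0..} (\<lambda>r. \<beta> r t)"
    using assms by (auto simp: class_KL_def class_K_def class_P_def)
  then show ?thesis
    using strict_mono_on_leD[of "{0..}" "\<lambda>r. \<beta> r t" 0 r] assms(2) by simp
qed

lemma KL_bound_on_interval:
  fixes \<omega> \<eta> \<theta> :: "real \<Rightarrow> real"
  assumes "\<theta> \<in> class_P" and "\<beta> \<in> class_KL"
    and decay: "\<And>r t x. 0 \<le> t \<Longrightarrow> 0 < x \<Longrightarrow>
      (\<And>m. \<forall>z\<in>{x..2 * r}. m \<le> \<theta> z \<Longrightarrow> x + m * t \<le> r) \<Longrightarrow> x \<le> \<beta> r t"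
    and "t0 \<le> t" and "continuous_on {t0..t} \<omega>" and "\<eta> integrable_on {t0..t}"
    and "\<And>s. s \<in> {t0..t} \<Longrightarrow> 0 \<le> \<omega> s" and "\<And>s. s \<in> {t0..t} \<Longrightarrow> 0 \<le> \<eta> s"
    and "\<And>s. s \<in> {t0..t} \<Longrightarrow> continuous (at_right s) \<eta>"
    and "\<And>s. s \<in> {t0..t} \<Longrightarrow> dini_upper_right \<omega> s \<le> ereal (- \<theta> (\<omega> s) + \<eta> s)"
  shows "\<omega> t \<le> \<beta> (\<omega> t0) (t - t0) + 2 * integral {t0..t} \<eta>"
proof -
  have "0 \<le> integral {t0..t} \<eta>" using assms(6,8) by (intro integral_nonneg) auto
  moreover have "0 \<le> \<beta> (\<omega> t0) (t - t0)" using assms(4,7) by (intro class_KL_nonneg[OF assms(2)]) auto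
  moreover have "\<omega> t - integral {t0..t} \<eta> \<le> \<beta> (\<omega> t0) (t - t0)"
    if large: "2 * integral {t0..t} \<eta> < \<omega> t"
  proof (rule decay)
    show "0 \<le> t - t0" "0 < \<omega> t - integral {t0..t} \<eta>"
      using \<open>t0 \<le> t\<close> large \<open>0 \<le> integral {t0..t} \<eta>\<close> by simp_all
    fix m assume "\<forall>z\<in>{\<omega> t - integral {t0..t} \<eta>..2 * \<omega> t0}. m \<le> \<theta> z"
    with assms(4-10) large class_P_nonneg[OF assms(1)]
    show "\<omega> t - integral {t0..t} \<eta> + m * (t - t0) \<le> \<omega> t0"
      by (intro trajectory_estimate[where \<theta> = \<theta>]) simp_all
  qed
  ultimately show ?thesis by linarith
qed

theorem mainTheorem2:
  fixes \<theta> :: "real \<Rightarrow> real"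
  assumes "\<theta> \<in> class_P"
  shows "\<exists>\<beta>\<in>class_KL. \<forall>(t0::real) (\<tau>::ereal) (\<omega>::real \<Rightarrow> real) (\<eta>::real \<Rightarrow> real).
     let I = {t. t0 \<le> t \<and> ereal t < ereal t0 + \<tau>} in
     t0 \<ge> 0 \<longrightarrow> \<tau> > 0 \<longrightarrow>
     continuous_on I \<omega> \<longrightarrow> (\<forall>t\<in>I. \<omega> t \<ge> 0) \<longrightarrow>
     (\<forall>t\<in>I. \<eta> t \<ge> 0) \<longrightarrow> right_continuous_on I \<eta> \<longrightarrow> piecewise_continuous_on I \<eta> \<longrightarrow>
     (\<forall>t\<in>I. dini_upper_right \<omega> t \<le> ereal (- \<theta> (\<omega> t) + \<eta> t)) \<longrightarrow>
     (\<forall>t\<in>I. \<omega> t \<le> \<beta> (\<omega> t0) (t - t0) + 2 * integral {t0..t} \<eta>)"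
proof -
  obtain \<beta> where "\<beta> \<in> class_KL" and decay: "\<And>r t x. 0 \<le> t \<Longrightarrow> 0 < x \<Longrightarrow>
      (\<And>m. \<forall>z\<in>{x..2 * r}. m \<le> \<theta> z \<Longrightarrow> x + m * t \<le> r) \<Longrightarrow> x \<le> \<beta> r t"
    using KL_bound_exists[OF assms] by blast
  show ?thesis
  proof (rule bexI[OF _ \<open>\<beta> \<in> class_KL\<close>], unfold Let_def, intro allI impI ballI)
    fix t0 t :: real and \<tau> :: ereal and \<omega> \<eta> :: "real \<Rightarrow> real"
    let ?I = "{t. t0 \<le> t \<and> ereal t < ereal t0 + \<tau>}"
    assume "0 \<le> t0" "0 < \<tau>" "continuous_on ?I \<omega>" "\<forall>t\<in>?I. 0 \<le> \<omega> t" "\<forall>t\<in>?I. 0 \<le> \<eta> t"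
      "right_continuous_on ?I \<eta>" "piecewise_continuous_on ?I \<eta>"
      "\<forall>t\<in>?I. dini_upper_right \<omega> t \<le> ereal (- \<theta> (\<omega> t) + \<eta> t)" "t \<in> ?I"
    note hyps = this
    have sub: "{t0..t} \<subseteq> ?I"
      using \<open>t \<in> ?I\<close> by (auto intro: le_less_trans[of "ereal _" "ereal t"])
    then have "\<forall>s\<in>{t0..t}. 0 \<le> \<omega> s \<and> 0 \<le> \<eta> s \<and> continuous (at_right s) \<eta> \<and>
        dini_upper_right \<omega> s \<le> ereal (- \<theta> (\<omega> s) + \<eta> s)"
      using hyps unfolding right_continuous_on_def by blast
    with \<open>t \<in> ?I\<close> show "\<omega> t \<le> \<beta> (\<omega> t0) (t - t0) + 2 * integral {t0..t} \<eta>"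
      by (intro KL_bound_on_interval[OF assms \<open>\<beta> \<in> class_KL\<close> decay]
          continuous_on_subset[OF hyps(3) sub] piecewise_continuous_integrable[OF hyps(7,6) sub]) auto
  qed
qed

end
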